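(* Let $F$ be a field, $n\ge 2$, and let $r_1,\ldots,r_m$ be strictly upper triangular matrix units in $M_n(F)$ (i.e. each $r_l=e_{i_lj_l}$ with $i_l<j_l$) such that the associative product $r_1r_2\cdots r_m\neq 0$. Then for $\sigma\in\mathcal{S}_m$: (i) $r_{\sigma^{-1}(1)}r_{\sigma^{-1}(2)}\cdots r_{\sigma^{-1}(m)}\neq 0$ if and only if $\sigma$ is the identity; (ii) the left-normed commutator $[r_{\sigma^{-1}(1)},r_{\sigma^{-1}(2)},\ldots,r_{\sigma^{-1}(m)}]\neq 0$ if and only if $\sigma\in\mathscr{T}_m$.
   Context: $e_{ij}$ denotes the matrix unit with $1$ in position $(i,j)$ and $0$ elsewhere. Left-normed commutators: $[x_1,x_2]=x_1x_2-x_2x_1$ and $[x_1,\ldots,x_k]=[[x_1,\ldots,x_{k-1}],x_k]$ for $k>2$. $\mathcal{S}_m$ is the group of bijections of $I_m=\{1,\ldots,m\}$, with $\sigma\circ\tau$ meaning apply $\tau$ first. $\mathscr{T}_m=\{\sigma\in\mathcal{S}_m \mid \exists t\in I_m:\ \sigma(1)>\sigma(2)>\cdots>\sigma(t)=1,\ \sigma(t)<\sigma(t+1)<\cdots<\sigma(m)\}$. *)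

theory Defs
  imports "Jordan_Normal_Form.Matrix" "HOL-Combinatorics.Permutations"
begin

text \<open>Matrix unit e_ij in M_n(F) (0-based indices i, j < n).\<close>
definition mat_unit :: "nat \<Rightarrow> nat \<Rightarrow> nat \<Rightarrow> 'a::field mat" where
  "mat_unit n i j = mat n n (\<lambda>(a, b). if a = i \<and> b = j then 1 else 0)"

definition mat_list_prod :: "nat \<Rightarrow> 'a::field mat list \<Rightarrow> 'a mat" where
  "mat_list_prod n Ms = foldr (\<lambda>A B. A * B) Ms (1\<^sub>m n)"

fun lcomm :: "'a::field mat list \<Rightarrow> 'a mat" where
  "lcomm [] = undefined"
| "lcomm [x] = x"
| "lcomm (x # y # xs) = lcomm ((x * y - y * x) # xs)"

definition Tset :: "nat \<Rightarrow> (nat \<Rightarrow> nat) set" where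
  "Tset m = {\<sigma>. \<sigma> permutes {1..m} \<and>
     (\<exists>t\<in>{1..m}. \<sigma> t = 1 \<and>
        (\<forall>k. 1 \<le> k \<and> k < t \<longrightarrow> \<sigma> k > \<sigma> (Suc k)) \<and>
        (\<forall>k. t \<le> k \<and> k < m \<longrightarrow> \<sigma> k < \<sigma> (Suc k)))}"

end

theory Submission
  imports Defs
begin

text \<open>
  A nonzero product of matrix units forces them to form a chain: r_l = e_{a(l-1),a(l)}
  with a strictly increasing. In any reordering, adjacent factors multiply to something
  nonzero only if their indices are consecutive, which forces the identity ordering.
  For the commutator, the partial commutator of the first factors in the permuted order is
  always a nonzero multiple of e_{a(p-1),a(q)}, where {p..q} is the set of positions used so
  far; commuting it with the next unit e_{a(k-1),a(k)} gives something nonzero exactly when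
  k is adjacent to {p..q}, and then the interval grows by one. So the commutator survives
  iff the positions are added outward from t = \<sigma>\<inverse>(1), i.e. \<sigma> decreases to the left of t
  and increases to its right.
\<close>

lemma mat_unit_dims [simp]: "dim_row (mat_unit n x y) = n" "dim_col (mat_unit n x y) = n"
  by (simp_all add: mat_unit_def)

lemma mat_unit_carrier [simp]: "mat_unit n x y \<in> carrier_mat n n"
  by (simp add: mat_unit_def)

lemma mat_unit_mult:
  assumes "b < n"
  shows "(mat_unit n a b :: 'a::field mat) * mat_unit n c d = (if b = c then mat_unit n a d else 0\<^sub>m n n)"
proof (rule eq_matI)
  fix x y assume "x < dim_row (if b = c then mat_unit n a d else (0\<^sub>m n n :: 'a mat))"
    "y < dim_col (if b = c then mat_unit n a d else (0\<^sub>m n n :: 'a mat))"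
  then have x: "x < n" and y: "y < n" by (auto simp: mat_unit_def split: if_splits)
  have "(mat_unit n a b * mat_unit n c d :: 'a mat) $$ (x, y)
      = (\<Sum>k\<in>{0..<n}. (if x = a \<and> k = b then 1 else 0) * (if k = c \<and> y = d then 1 else (0::'a)))"
    using x y by (simp add: mat_unit_def scalar_prod_def)
  also have "\<dots> = (\<Sum>k\<in>{0..<n}. if k = b then (if x = a \<and> b = c \<and> y = d then 1 else 0) else (0::'a))"
    by (rule sum.cong) auto
  also have "\<dots> = (if b = c then mat_unit n a d else 0\<^sub>m n n) $$ (x, y)"
    using assms x y by (simp add: mat_unit_def)
  finally show "(mat_unit n a b * mat_unit n c d :: 'a mat) $$ (x, y) = (if b = c then mat_unit n a d else 0\<^sub>m n n) $$ (x, y)" .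
qed (auto simp: mat_unit_def)

lemma smult_mat_unit_neq_zero:
  assumes "x < n" "y < n" "c \<noteq> 0"
  shows "c \<cdot>\<^sub>m (mat_unit n x y :: 'a::field mat) \<noteq> 0\<^sub>m n n"
proof
  assume "c \<cdot>\<^sub>m (mat_unit n x y :: 'a mat) = 0\<^sub>m n n"
  then have "(c \<cdot>\<^sub>m (mat_unit n x y :: 'a mat)) $$ (x, y) = 0\<^sub>m n n $$ (x, y)" by simp
  with assms show False by (simp add: mat_unit_def)
qed

lemma smult_one_mat_unit [simp]: "(1::'a::field) \<cdot>\<^sub>m mat_unit n x y = mat_unit n x y"
  by (rule eq_matI) (auto simp: mat_unit_def)

lemma mat_unit_neq_zero: "x < n \<Longrightarrow> y < n \<Longrightarrow> (mat_unit n x y :: 'a::field mat) \<noteq> 0\<^sub>m n n"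
  using smult_mat_unit_neq_zero[of x n y "1::'a"] by simp

lemma smult_mat_unit_commutator:
  fixes c :: "'a::field"
  assumes "b < n" "d < n"
  shows "(c \<cdot>\<^sub>m mat_unit n a b) * mat_unit n e d - mat_unit n e d * (c \<cdot>\<^sub>m mat_unit n a b)
    = (if b = e then c \<cdot>\<^sub>m mat_unit n a d else 0\<^sub>m n n) - (if d = a then c \<cdot>\<^sub>m mat_unit n e b else 0\<^sub>m n n)"
proof -
  have "(c \<cdot>\<^sub>m mat_unit n a b) * mat_unit n e d = c \<cdot>\<^sub>m (mat_unit n a b * mat_unit n e d)"
    using mult_smult_assoc_mat[of "mat_unit n a b" n n "mat_unit n e d" n c] by simp
  moreover have "mat_unit n e d * (c \<cdot>\<^sub>m mat_unit n a b) = c \<cdot>\<^sub>m (mat_unit n e d * mat_unit n a b)"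
    using mult_smult_distrib[of "mat_unit n e d" n n "mat_unit n a b" n c] by simp
  ultimately show ?thesis using assms by (simp add: mat_unit_mult)
qed

lemma lcomm_zero_Cons:
  "\<forall>y\<in>set xs. y \<in> carrier_mat n n \<Longrightarrow> lcomm (0\<^sub>m n n # xs) = (0\<^sub>m n n :: 'a::field mat)"
proof (induction xs)
  case (Cons y xs)
  then have "0\<^sub>m n n * y - y * 0\<^sub>m n n = (0\<^sub>m n n :: 'a mat)" by auto
  with Cons show ?case by simp
qed simp

fun chained :: "(nat \<times> nat) list \<Rightarrow> bool" where
  "chained (x # y # zs) = (snd x = fst y \<and> chained (y # zs))"
| "chained _ = True"

lemma chained_map_upt:
  "chained (map f [a..<b]) \<longleftrightarrow> (\<forall>l. a \<le> l \<and> Suc l < b \<longrightarrow> snd (f l) = fst (f (Suc l)))"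
proof (induction "b - a" arbitrary: a)
  case (Suc d)
  show ?case
  proof (cases "Suc a < b")
    case True
    then have "[a..<b] = a # Suc a # [Suc (Suc a)..<b]" "[Suc a..<b] = Suc a # [Suc (Suc a)..<b]"
      by (simp_all add: upt_conv_Cons)
    then have "chained (map f [a..<b]) \<longleftrightarrow> snd (f a) = fst (f (Suc a)) \<and> chained (map f [Suc a..<b])"
      by simp
    also have "\<dots> \<longleftrightarrow> (\<forall>l. a \<le> l \<and> Suc l < b \<longrightarrow> snd (f l) = fst (f (Suc l)))"
      using Suc True by (auto simp: le_Suc_eq Suc_le_eq) (metis le_neq_implies_less Suc_leI)
    finally show ?thesis .
  next
    case False
    with Suc have "[a..<b] = [a]" by (simp add: upt_conv_Cons)
    with False show ?thesis by auto
  qed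
qed auto

lemma mat_list_prod_mat_units:
  assumes "ps \<noteq> []" "\<forall>(x, y)\<in>set ps. x < n \<and> y < n"
  shows "mat_list_prod n (map (\<lambda>(x, y). mat_unit n x y) ps)
    = (if chained ps then mat_unit n (fst (hd ps)) (snd (last ps)) else (0\<^sub>m n n :: 'a::field mat))"
  using assms
proof (induction ps rule: chained.induct)
  case (1 p q qs)
  have "mat_list_prod n (map (\<lambda>(x, y). mat_unit n x y) (p # q # qs))
      = (mat_unit n (fst p) (snd p) :: 'a mat) * mat_list_prod n (map (\<lambda>(x, y). mat_unit n x y) (q # qs))"
    by (cases p) (simp add: mat_list_prod_def)
  also have "\<dots> = mat_unit n (fst p) (snd p)
      * (if chained (q # qs) then mat_unit n (fst q) (snd (last (q # qs))) else 0\<^sub>m n n)"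
    using 1 by auto
  also have "\<dots> = (if chained (p # q # qs) then mat_unit n (fst p) (snd (last (q # qs))) else 0\<^sub>m n n)"
    using "1.prems" by (cases p) (auto simp: mat_unit_mult right_mult_zero_mat[OF mat_unit_carrier])
  finally show ?case by simp
qed (auto simp: mat_list_prod_def right_mult_one_mat[OF mat_unit_carrier])

lemma less_by_Suc_steps:
  fixes f :: "nat \<Rightarrow> 'b::order"
  assumes "\<And>k. a \<le> k \<Longrightarrow> k < b \<Longrightarrow> f k < f (Suc k)" "a \<le> x" "x < y" "y \<le> b"
  shows "f x < f y"
  using assms(3,4)
proof (induction y)
  case (Suc y)
  have "f y < f (Suc y)" using Suc.prems assms(1,2) by simp
  moreover have "x = y \<or> f x < f y" using Suc.IH Suc.prems by (cases "x = y") auto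
  ultimately show ?case by auto
qed simp

definition valley_shaped :: "(nat \<Rightarrow> nat) \<Rightarrow> nat \<Rightarrow> nat \<Rightarrow> nat \<Rightarrow> bool" where
  "valley_shaped \<sigma> m p q \<longleftrightarrow>
     (\<forall>k. 1 \<le> k \<and> k < p \<longrightarrow> \<sigma> (Suc k) < \<sigma> k) \<and> (\<forall>k. q \<le> k \<and> k < m \<longrightarrow> \<sigma> k < \<sigma> (Suc k))"

lemma valley_shaped_extend_right:
  "\<sigma> q < \<sigma> (Suc q) \<Longrightarrow> valley_shaped \<sigma> m p (Suc q) \<longleftrightarrow> valley_shaped \<sigma> m p q"
  unfolding valley_shaped_def by (auto simp: le_Suc_eq) (metis le_antisym not_less_eq_eq)

lemma valley_shaped_extend_left:
  "\<sigma> (Suc k) < \<sigma> k \<Longrightarrow> 1 \<le> k \<Longrightarrow> valley_shaped \<sigma> m k q \<longleftrightarrow> valley_shaped \<sigma> m (Suc k) q"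
  unfolding valley_shaped_def by (auto simp: less_Suc_eq)

definition sublevel_interval :: "(nat \<Rightarrow> nat) \<Rightarrow> nat \<Rightarrow> nat \<Rightarrow> nat \<Rightarrow> nat \<Rightarrow> bool" where
  "sublevel_interval \<sigma> m s p q \<longleftrightarrow> (\<forall>x\<in>{1..m}. \<sigma> x < s \<longleftrightarrow> p \<le> x \<and> x \<le> q)"

lemma sublevel_interval_top:
  assumes "\<sigma> permutes {1..m}" "sublevel_interval \<sigma> m (m + 1) p q" "1 \<le> p" "p \<le> q" "q \<le> m"
  shows "p = 1" "q = m"
proof -
  have "1 \<in> {1..m}" "m \<in> {1..m}"
    using assms(3-5) by auto
  moreover have "\<sigma> x < m + 1" if "x \<in> {1..m}" for x
    using permutes_in_image[OF assms(1), of x] that by auto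
  ultimately have "p \<le> 1" "m \<le> q"
    using assms(2) unfolding sublevel_interval_def by blast+
  with assms(3,5) show "p = 1" "q = m"
    by auto
qed

lemma sublevel_interval_Suc:
  assumes "inj \<sigma>" "sublevel_interval \<sigma> m s p q" "\<sigma> k = s" "x \<in> {1..m}"
  shows "\<sigma> x < Suc s \<longleftrightarrow> (p \<le> x \<and> x \<le> q) \<or> x = k"
proof -
  have "\<sigma> x < Suc s \<longleftrightarrow> \<sigma> x < s \<or> \<sigma> x = \<sigma> k"
    using assms(3) by auto
  also have "\<dots> \<longleftrightarrow> (p \<le> x \<and> x \<le> q) \<or> x = k"
    using assms(2,4) inj_eq[OF assms(1)] unfolding sublevel_interval_def by blast
  finally show ?thesis .
qed

lemma sublevel_interval_extend_right:
  assumes "inj \<sigma>" "sublevel_interval \<sigma> m s p q" "1 \<le> p" "p \<le> q" "q \<le> m" "\<sigma> (Suc q) = s"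
  shows "sublevel_interval \<sigma> m (Suc s) p (Suc q)"
    and "valley_shaped \<sigma> m p (Suc q) \<longleftrightarrow> valley_shaped \<sigma> m p q"
proof -
  show "sublevel_interval \<sigma> m (Suc s) p (Suc q)"
    unfolding sublevel_interval_def
    using sublevel_interval_Suc[OF assms(1,2,6)] assms(4) by (auto simp: le_Suc_eq)
  have "\<sigma> q < \<sigma> (Suc q)"
    using bspec[OF assms(2)[unfolded sublevel_interval_def], of q] assms(3-6) by auto
  then show "valley_shaped \<sigma> m p (Suc q) \<longleftrightarrow> valley_shaped \<sigma> m p q"
    by (rule valley_shaped_extend_right)
qed

lemma sublevel_interval_extend_left:
  assumes "inj \<sigma>" "sublevel_interval \<sigma> m s (Suc k) q" "1 \<le> k" "Suc k \<le> q" "q \<le> m" "\<sigma> k = s"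
  shows "sublevel_interval \<sigma> m (Suc s) k q"
    and "valley_shaped \<sigma> m k q \<longleftrightarrow> valley_shaped \<sigma> m (Suc k) q"
proof -
  show "sublevel_interval \<sigma> m (Suc s) k q"
    unfolding sublevel_interval_def
    using sublevel_interval_Suc[OF assms(1,2,6)] assms(4) by (auto simp: Suc_le_eq)
  have "\<sigma> (Suc k) < \<sigma> k"
    using bspec[OF assms(2)[unfolded sublevel_interval_def], of "Suc k"] assms(3-6) by auto
  then show "valley_shaped \<sigma> m k q \<longleftrightarrow> valley_shaped \<sigma> m (Suc k) q"
    using assms(3) by (rule valley_shaped_extend_left)
qed

lemma not_valley_shaped_if_gap:
  assumes interval: "sublevel_interval \<sigma> m s p q"
    and "1 \<le> p" "p \<le> m" "k \<in> {1..m}" "\<sigma> k = s" "Suc k < p \<or> Suc q < k"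
  shows "\<not> valley_shaped \<sigma> m p q"
proof
  assume valley: "valley_shaped \<sigma> m p q"
  show False
    using \<open>Suc k < p \<or> Suc q < k\<close>
  proof
    assume "Suc k < p"
    then have "\<sigma> (p - 1) < \<sigma> k"
      using less_by_Suc_steps[of 1 "p - 1" "\<lambda>x. - int (\<sigma> x)" k "p - 1"] valley assms(4)
      unfolding valley_shaped_def by auto
    moreover have "p - 1 \<in> {1..m}" "\<not> p \<le> p - 1"
      using \<open>Suc k < p\<close> assms(3,4) by auto
    then have "\<not> \<sigma> (p - 1) < s"
      using interval unfolding sublevel_interval_def by blast
    ultimately show False using assms(5) by simp
  next
    assume "Suc q < k"
    then have "\<sigma> (Suc q) < \<sigma> k"
      using less_by_Suc_steps[of q m \<sigma> "Suc q" k] valley assms(4) unfolding valley_shaped_def by auto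
    moreover have "\<not> \<sigma> (Suc q) < s"
      using interval \<open>Suc q < k\<close> assms(4) unfolding sublevel_interval_def by auto
    ultimately show False using assms(5) by simp
  qed
qed

lemma Tset_iff_valley_shaped:
  assumes "\<sigma> permutes {1..m}" "t \<in> {1..m}" "\<sigma> t = 1"
  shows "\<sigma> \<in> Tset m \<longleftrightarrow> valley_shaped \<sigma> m t t"
proof -
  have unique: "t' = t" if "\<sigma> t' = 1" for t'
    using that assms by (metis permutes_inj injD)
  show ?thesis
  proof
    assume "\<sigma> \<in> Tset m"
    then obtain t' where "\<sigma> t' = 1" "valley_shaped \<sigma> m t' t'"
      unfolding Tset_def valley_shaped_def by blast
    with unique show "valley_shaped \<sigma> m t t" by blast
  next
    assume "valley_shaped \<sigma> m t t"
    with assms show "\<sigma> \<in> Tset m"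
      unfolding Tset_def valley_shaped_def by blast
  qed
qed

lemma permutes_id_if_Suc_steps:
  assumes perm: "\<tau> permutes {1..m}" and steps: "\<And>l. 1 \<le> l \<Longrightarrow> l < m \<Longrightarrow> \<tau> (Suc l) = Suc (\<tau> l)"
  shows "\<tau> = id"
proof (cases "m = 0")
  case False
  have shift: "\<tau> l = \<tau> 1 + (l - 1)" if "1 \<le> l" "l \<le> m" for l
    using that
  proof (induction l)
    case (Suc l)
    then show ?case using steps by (cases "l = 0") auto
  qed simp
  have "\<tau> m \<le> m" "1 \<le> \<tau> 1"
    using permutes_in_image[OF perm, of m] permutes_in_image[OF perm, of 1] False by auto
  then have "\<tau> 1 = 1" using shift[of m] False by auto
  then have "\<tau> x = x" for x
    using shift[of x] permutes_not_in[OF perm, of x] by (cases "x \<in> {1..m}") auto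
  then show ?thesis by auto
qed (use perm in \<open>simp add: permutes_empty\<close>)

locale unit_path =
  fixes n m :: nat and a :: "nat \<Rightarrow> nat"
  assumes path_less: "x < y \<Longrightarrow> y \<le> m \<Longrightarrow> a x < a y"
    and path_bound: "a m < n"
begin

lemma path_less_dim: "x \<le> m \<Longrightarrow> a x < n"
  using path_less[of x m] path_bound by (cases "x = m") auto

lemma path_eq_iff: "x \<le> m \<Longrightarrow> y \<le> m \<Longrightarrow> a x = a y \<longleftrightarrow> x = y"
  using path_less[of x y] path_less[of y x] by (cases x y rule: linorder_cases) auto

definition step_unit :: "nat \<Rightarrow> 'b::field mat" where
  "step_unit k = mat_unit n (a (k - 1)) (a k)"

lemma step_unit_carrier [simp]: "step_unit k \<in> carrier_mat n n"
  by (simp add: step_unit_def)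

lemma commutator_step_unit:
  fixes c :: "'b::field"
  assumes "1 \<le> p" "p \<le> q" "q \<le> m" "k \<in> {1..m}" "k \<notin> {p..q}"
  shows "(c \<cdot>\<^sub>m mat_unit n (a (p - 1)) (a q)) * step_unit k - step_unit k * (c \<cdot>\<^sub>m mat_unit n (a (p - 1)) (a q))
    = (if k = Suc q then c \<cdot>\<^sub>m mat_unit n (a (p - 1)) (a k)
       else if Suc k = p then (- c) \<cdot>\<^sub>m mat_unit n (a (k - 1)) (a q)
       else 0\<^sub>m n n)"
proof -
  have "a q = a (k - 1) \<longleftrightarrow> k = Suc q" "a k = a (p - 1) \<longleftrightarrow> Suc k = p"
    using assms path_eq_iff by auto
  moreover have "\<not> (k = Suc q \<and> Suc k = p)"
    using assms(2) by auto
  ultimately show ?thesis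
    unfolding step_unit_def using assms path_less_dim
    by (auto simp: smult_mat_unit_commutator intro!: eq_matI)
qed

text \<open>The factors with \<sigma>-value below s have already been commuted into c \<cdot> e_{a(p-1),a(q)}.\<close>

lemma lcomm_permuted_suffix_neq_zero_iff:
  fixes c :: "'b::field"
  assumes perm: "\<sigma> permutes {1..m}"
  shows "1 \<le> p \<Longrightarrow> p \<le> q \<Longrightarrow> q \<le> m \<Longrightarrow> c \<noteq> 0 \<Longrightarrow> s \<le> m + 1 \<Longrightarrow>
    sublevel_interval \<sigma> m s p q \<Longrightarrow>
    lcomm (c \<cdot>\<^sub>m mat_unit n (a (p - 1)) (a q) # map (\<lambda>k. step_unit (inv_into UNIV \<sigma> k)) [s..<m+1])
      \<noteq> 0\<^sub>m n n
    \<longleftrightarrow> valley_shaped \<sigma> m p q"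
proof (induction "m + 1 - s" arbitrary: s p q c)
  case 0
  then have "s = m + 1" "p = 1" "q = m"
    using sublevel_interval_top[OF perm] by auto
  with "0.prems" show ?case
    using smult_mat_unit_neq_zero[OF path_less_dim path_less_dim, of 0 m c] by (simp add: valley_shaped_def)
next
  case (Suc d s p q c)
  have "s \<le> m"
    using Suc by auto
  have "1 \<le> s"
    using bspec[OF Suc.prems(6)[unfolded sublevel_interval_def], of p] Suc.prems(1-3) by auto
  define k where "k = inv_into UNIV \<sigma> s"
  have k: "k \<in> {1..m}" "\<sigma> k = s"
    using permutes_in_image[OF permutes_inv[OF perm], of s] \<open>s \<le> m\<close> \<open>1 \<le> s\<close> unfolding k_def
    by (auto simp: permutes_inverses(1)[OF perm])
  then have "k \<notin> {p..q}"
    using Suc.prems(6) unfolding sublevel_interval_def by auto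
  have inj: "inj \<sigma>"
    using perm by (rule permutes_inj)
  let ?X = "c \<cdot>\<^sub>m mat_unit n (a (p - 1)) (a q)"
  let ?rest = "map (\<lambda>k. step_unit (inv_into UNIV \<sigma> k)) [Suc s..<m+1] :: 'b mat list"
  have unfold: "lcomm (?X # map (\<lambda>k. step_unit (inv_into UNIV \<sigma> k)) [s..<m+1])
      = lcomm ((?X * step_unit k - step_unit k * ?X) # ?rest)"
    using \<open>s \<le> m\<close> upt_conv_Cons[of s "m + 1"] by (simp add: k_def)
  note commutator = commutator_step_unit[OF Suc.prems(1-3) k(1) \<open>k \<notin> {p..q}\<close>, of c]
  have "d = m + 1 - Suc s" "Suc s \<le> m + 1"
    using Suc.hyps(2) \<open>s \<le> m\<close> by simp_all
  note IH = Suc.hyps(1)[OF this(1) _ _ _ _ this(2)]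
  consider "k = Suc q" | "Suc k = p" | "Suc k < p \<or> Suc q < k"
    using \<open>k \<notin> {p..q}\<close> by fastforce
  then show ?case
  proof cases
    case 1
    note extend = sublevel_interval_extend_right[OF inj Suc.prems(6,1-3) k(2)[unfolded 1]]
    have "lcomm (?X # map (\<lambda>k. step_unit (inv_into UNIV \<sigma> k)) [s..<m+1])
        = lcomm (c \<cdot>\<^sub>m mat_unit n (a (p - 1)) (a (Suc q)) # ?rest)"
      using unfold commutator 1 by simp
    then show ?thesis
      using IH[of p "Suc q" c, OF _ _ _ _ extend(1)] extend(2) Suc.prems(1,2,4) k(1) 1 by simp
  next
    case 2
    have "1 \<le> k" "Suc k \<le> q"
      using k(1) Suc.prems(2) 2 by auto
    note extend = sublevel_interval_extend_left[OF inj Suc.prems(6)[folded 2] this Suc.prems(3) k(2)]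
    have "lcomm (?X # map (\<lambda>k. step_unit (inv_into UNIV \<sigma> k)) [s..<m+1])
        = lcomm ((- c) \<cdot>\<^sub>m mat_unit n (a (k - 1)) (a q) # ?rest)"
      using unfold commutator 2 Suc.prems(2) by simp
    then show ?thesis
      using IH[of k q "- c", OF _ _ _ _ extend(1)] extend(2) Suc.prems(2-4) k(1) 2 by simp
  next
    case 3
    then have "?X * step_unit k - step_unit k * ?X = 0\<^sub>m n n"
      using commutator Suc.prems(2) by auto
    then have "lcomm (?X # map (\<lambda>k. step_unit (inv_into UNIV \<sigma> k)) [s..<m+1]) = 0\<^sub>m n n"
      unfolding unfold by (simp only: \<open>?X * step_unit k - step_unit k * ?X = 0\<^sub>m n n\<close>)
        (rule lcomm_zero_Cons, simp)
    moreover have "\<not> valley_shaped \<sigma> m p q"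
      using not_valley_shaped_if_gap[OF Suc.prems(6) Suc.prems(1) _ k 3] Suc.prems(2,3) by simp
    ultimately show ?thesis by simp
  qed
qed

lemma mat_list_prod_permuted_step_units_neq_zero_iff:
  assumes perm: "\<sigma> permutes {1..m}" and "1 \<le> m"
  shows "mat_list_prod n (map (\<lambda>k. step_unit (inv_into UNIV \<sigma> k)) [1..<m+1]) \<noteq> (0\<^sub>m n n :: 'b::field mat)
    \<longleftrightarrow> \<sigma> = id"
proof -
  define \<tau> where "\<tau> = inv_into UNIV \<sigma>"
  have \<tau>_perm: "\<tau> permutes {1..m}"
    unfolding \<tau>_def using permutes_inv[OF perm] .
  have \<tau>_range: "\<tau> k \<in> {1..m}" if "k \<in> {1..m}" for k
    using permutes_in_image[OF \<tau>_perm] that by blast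
  let ?ps = "map (\<lambda>k. (a (\<tau> k - 1), a (\<tau> k))) [1..<m+1]"
  have units: "map (\<lambda>k. step_unit (\<tau> k)) [1..<m+1] = map (\<lambda>(x, y). mat_unit n x y) ?ps"
    by (simp add: step_unit_def)
  have bounds: "\<forall>(x, y)\<in>set ?ps. x < n \<and> y < n"
    using \<tau>_range path_less_dim by fastforce
  have "?ps \<noteq> []"
    using \<open>1 \<le> m\<close> by simp
  then have "fst (hd ?ps) < n" "snd (last ?ps) < n"
    using bspec[OF bounds hd_in_set] bspec[OF bounds last_in_set] by (simp_all only: case_prod_beta) blast+
  then have "mat_unit n (fst (hd ?ps)) (snd (last ?ps)) \<noteq> (0\<^sub>m n n :: 'b mat)"
    by (rule mat_unit_neq_zero)
  moreover have "mat_list_prod n (map (\<lambda>k. step_unit (\<tau> k)) [1..<m+1])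
      = (if chained ?ps then mat_unit n (fst (hd ?ps)) (snd (last ?ps)) else (0\<^sub>m n n :: 'b mat))"
    unfolding units using \<open>?ps \<noteq> []\<close> bounds by (rule mat_list_prod_mat_units)
  ultimately have "mat_list_prod n (map (\<lambda>k. step_unit (\<tau> k)) [1..<m+1]) \<noteq> (0\<^sub>m n n :: 'b mat)
      \<longleftrightarrow> chained ?ps"
    by (simp del: upt_Suc)
  also have "\<dots> \<longleftrightarrow> (\<forall>l. 1 \<le> l \<and> l < m \<longrightarrow> \<tau> (Suc l) = Suc (\<tau> l))"
  proof -
    have "a (\<tau> l) = a (\<tau> (Suc l) - 1) \<longleftrightarrow> \<tau> (Suc l) = Suc (\<tau> l)" if "1 \<le> l" "l < m" for l
      using \<tau>_range[of l] \<tau>_range[of "Suc l"] that path_eq_iff by auto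
    then show ?thesis
      unfolding chained_map_upt by auto
  qed
  also have "\<dots> \<longleftrightarrow> \<tau> = id"
    using permutes_id_if_Suc_steps[OF \<tau>_perm] by auto
  also have "\<dots> \<longleftrightarrow> \<sigma> = id"
    unfolding \<tau>_def using permutes_bij[OF perm] by (metis inv_id inv_inv_eq)
  finally show ?thesis
    unfolding \<tau>_def .
qed

lemma lcomm_permuted_step_units_neq_zero_iff:
  assumes perm: "\<sigma> permutes {1..m}" and "1 \<le> m"
  shows "lcomm (map (\<lambda>k. step_unit (inv_into UNIV \<sigma> k)) [1..<m+1]) \<noteq> (0\<^sub>m n n :: 'b::field mat)
    \<longleftrightarrow> \<sigma> \<in> Tset m"
proof -
  define t where "t = inv_into UNIV \<sigma> 1"
  have t: "t \<in> {1..m}" "\<sigma> t = 1"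
    using permutes_in_image[OF permutes_inv[OF perm], of 1] \<open>1 \<le> m\<close>
    by (auto simp: t_def permutes_inverses(1)[OF perm])
  have "sublevel_interval \<sigma> m 2 t t"
    unfolding sublevel_interval_def
  proof
    fix k assume "k \<in> {1..m}"
    then have "\<sigma> k < 2 \<longleftrightarrow> \<sigma> k = \<sigma> t"
      using permutes_in_image[OF perm, of k] t(2) by auto
    also have "\<dots> \<longleftrightarrow> k = t"
      using permutes_inj[OF perm] by (simp add: inj_eq)
    finally show "\<sigma> k < 2 \<longleftrightarrow> t \<le> k \<and> k \<le> t"
      by auto
  qed
  then have "lcomm ((1::'b) \<cdot>\<^sub>m mat_unit n (a (t - 1)) (a t)
        # map (\<lambda>k. step_unit (inv_into UNIV \<sigma> k)) [2..<m+1]) \<noteq> 0\<^sub>m n n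
      \<longleftrightarrow> valley_shaped \<sigma> m t t"
    using t \<open>1 \<le> m\<close> by (intro lcomm_permuted_suffix_neq_zero_iff[OF perm]) auto
  moreover have "[1..<m+1] = 1 # [2..<m+1]"
    using \<open>1 \<le> m\<close> by (simp add: upt_conv_Cons numeral_2_eq_2)
  moreover have "step_unit t = (1::'b) \<cdot>\<^sub>m mat_unit n (a (t - 1)) (a t)"
    by (simp add: step_unit_def)
  ultimately show ?thesis
    unfolding Tset_iff_valley_shaped[OF perm t] by (simp only: list.map t_def)
qed

end

lemma unit_path_of_mat_list_prod_neq_zero:
  fixes r :: "nat \<Rightarrow> 'b::field mat"
  assumes "1 \<le> m"
    and units: "\<And>l. l \<in> {1..m} \<Longrightarrow> i l < j l \<and> j l < n \<and> r l = mat_unit n (i l) (j l)"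
    and nonzero: "mat_list_prod n (map r [1..<m+1]) \<noteq> 0\<^sub>m n n"
  obtains a where "unit_path n m a" "\<And>l. l \<in> {1..m} \<Longrightarrow> r l = mat_unit n (a (l - 1)) (a l)"
proof
  let ?ps = "map (\<lambda>l. (i l, j l)) [1..<m+1]"
  have r_units: "map r [1..<m+1] = map (\<lambda>(x, y). mat_unit n x y) ?ps"
    using units by (simp del: upt_Suc)
  have "?ps \<noteq> []"
    using \<open>1 \<le> m\<close> by simp
  moreover have "\<forall>(x, y)\<in>set ?ps. x < n \<and> y < n"
    using units by fastforce
  ultimately have "mat_list_prod n (map r [1..<m+1])
      = (if chained ?ps then mat_unit n (fst (hd ?ps)) (snd (last ?ps)) else 0\<^sub>m n n)"
    unfolding r_units by (rule mat_list_prod_mat_units)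
  with nonzero have "chained ?ps"
    by (simp del: upt_Suc split: if_splits)
  then have chain: "j l = i (Suc l)" if "1 \<le> l" "l < m" for l
    using that unfolding chained_map_upt by simp
  define a where "a l = (if l = 0 then i 1 else j l)" for l
  have a_units: "i l = a (l - 1)" "j l = a l" if "l \<in> {1..m}" for l
  proof -
    show "j l = a l"
      using that by (simp add: a_def)
    show "i l = a (l - 1)"
    proof (cases "l = 1")
      case False
      then show ?thesis
        using that chain[of "l - 1"] by (force simp: a_def)
    qed (simp add: a_def)
  qed
  show "r l = mat_unit n (a (l - 1)) (a l)" if "l \<in> {1..m}" for l
    using units a_units that by simp
  have step: "a k < a (Suc k)" if "k < m" for k
    using units[of "Suc k"] a_units[of "Suc k"] that by auto
  show "unit_path n m a"
  proof
    show "a x < a y" if "x < y" "y \<le> m" for x y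
      using less_by_Suc_steps[of 0 m a x y] step that by simp
    show "a m < n"
      using units[of m] a_units[of m] \<open>1 \<le> m\<close> by simp
  qed
qed

theorem mainTheorem2:
  fixes n m :: nat and r :: "nat \<Rightarrow> 'a::field mat" and i j :: "nat \<Rightarrow> nat"
    and \<sigma> :: "nat \<Rightarrow> nat"
  assumes "n \<ge> 2" and "m \<ge> 1"
    and "\<And>l. l \<in> {1..m} \<Longrightarrow> i l < j l \<and> j l < n \<and> r l = mat_unit n (i l) (j l)"
    and "mat_list_prod n (map r [1..<m+1]) \<noteq> 0\<^sub>m n n"
    and "\<sigma> permutes {1..m}"
  shows "(mat_list_prod n (map (\<lambda>k. r (inv_into UNIV \<sigma> k)) [1..<m+1]) \<noteq> 0\<^sub>m n n \<longleftrightarrow> \<sigma> = id)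
       \<and> (lcomm (map (\<lambda>k. r (inv_into UNIV \<sigma> k)) [1..<m+1]) \<noteq> 0\<^sub>m n n \<longleftrightarrow> \<sigma> \<in> Tset m)"
proof (rule unit_path_of_mat_list_prod_neq_zero[OF assms(2-4)])
  fix a
  assume path: "unit_path n m a" and r: "\<And>l. l \<in> {1..m} \<Longrightarrow> r l = mat_unit n (a (l - 1)) (a l)"
  interpret unit_path n m a
    by (fact path)
  have "map (\<lambda>k. r (inv_into UNIV \<sigma> k)) [1..<m+1] = map (\<lambda>k. step_unit (inv_into UNIV \<sigma> k)) [1..<m+1]"
  proof (rule map_cong[OF refl])
    fix k assume "k \<in> set [1..<m+1]"
    then have "inv_into UNIV \<sigma> k \<in> {1..m}"
      using permutes_in_image[OF permutes_inv[OF assms(5)], of k] by auto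
    then show "r (inv_into UNIV \<sigma> k) = step_unit (inv_into UNIV \<sigma> k)"
      unfolding step_unit_def by (rule r)
  qed
  then show ?thesis
    using mat_list_prod_permuted_step_units_neq_zero_iff[OF assms(5,2)]
      lcomm_permuted_step_units_neq_zero_iff[OF assms(5,2)]
    by (simp only:)
qed

end
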